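(* Let $n \ge 2$ be an integer, $\lambda > 0$ a real number and $C \ge 1$. There exists a constant $C'>0$ depending only on $n$ and $C$ such that the following holds. Let $(p_0,\ldots,p_n) \in \mathbb{Z}^{n+1}$ with $q := p_0 \ge 1$, $C^{-1} q \le |p_i| \le C q$ for all $i$, and $|p_{i-1}p_{i+1} - p_i^2| \le C q^{1-\lambda}$ for all $i \in \{1,\ldots,n-1\}$. Then for all positive integers $m,k$ with $k-m+1 \ge 0$ and $k+m-1 \le n$, the $m\times m$ Hankel matrix $$\Delta_{m,k} = \begin{pmatrix} p_{k-m+1} & p_{k-m+2} & \cdots & p_k \\ p_{k-m+2} & p_{k-m+3} & \cdots & p_{k+1} \\ \vdots & \vdots & \ddots & \vdots \\ p_k & p_{k+1} & \cdots & p_{k+m-1}\end{pmatrix}$$ (whose $(r,s)$ entry is $p_{k-m+r+s-1}$) satisfies $|\det \Delta_{m,k}| \le C' q^{1-(m-1)\lambda}$.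
   Context: The paper writes these statements with Vinogradov notation ($\ll$, $\asymp$); here implied constants are made explicit. *)

theory Defs
  imports Complex_Main "Jordan_Normal_Form.Determinant"
begin

text \<open>The m x m Hankel matrix Delta_{m,k}: with 0-based indices r, s < m the (r,s)
  entry is p_{k-m+1+r+s} (the paper's 1-based entry p_{k-m+r+s-1}).
  Used only when k + 1 >= m.\<close>
definition hankel :: "(nat \<Rightarrow> int) \<Rightarrow> nat \<Rightarrow> nat \<Rightarrow> int mat" where
  "hankel p m k = mat m m (\<lambda>(r, s). p (k + 1 - m + r + s))"

end

theory Submission
  imports Defs
begin

text \<open>For every row i >= 1 of the Hankel matrix, subtract p_1 times row i - 1 from p_0 times
  row i; this multiplies the determinant by p_0^(m-1). The new entries p_0 p_(j+1) - p_1 p_j are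
  p_0 p_j times the change of the ratio p_(i+1) / p_i between i = 0 and i = j, and each single
  step changes that ratio by (p_i p_(i+2) - p_(i+1)^2) / (p_i p_(i+1)) = O(q^(-1-lam)). So all rows
  but the first are O(q^(1-lam)), the first is O(q), and bounding the determinant by m! times the
  product of the row bounds gives q^(m-1) |det| = O(q^(1 + (m-1)(1-lam))).\<close>

lemma abs_det_le_fact_mult_prod:
  fixes A :: "'a::linordered_idom mat"
  assumes A: "A \<in> carrier_mat n n"
    and bound: "\<And>i j. i < n \<Longrightarrow> j < n \<Longrightarrow> \<bar>A $$ (i, j)\<bar> \<le> b i"
  shows "\<bar>det A\<bar> \<le> fact n * (\<Prod>i = 0..<n. b i)"
proof -
  let ?P = "{p. p permutes {0..<n}}"
  have "\<bar>det A\<bar> \<le> (\<Sum>p\<in>?P. \<bar>signof p * (\<Prod>i = 0..<n. A $$ (i, p i))\<bar>)"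
    unfolding det_def'[OF A] by (rule sum_abs)
  also have "\<dots> \<le> (\<Sum>p\<in>?P. \<Prod>i = 0..<n. b i)"
  proof (rule sum_mono)
    fix p assume "p \<in> ?P"
    then have "p i < n" if "i < n" for i
      using that by (auto dest: permutes_in_image)
    then have "(\<Prod>i = 0..<n. \<bar>A $$ (i, p i)\<bar>) \<le> (\<Prod>i = 0..<n. b i)"
      by (intro prod_mono) (auto intro: bound)
    then show "\<bar>signof p * (\<Prod>i = 0..<n. A $$ (i, p i))\<bar> \<le> (\<Prod>i = 0..<n. b i)"
      by (simp add: abs_mult abs_prod sign_def)
  qed
  also have "\<dots> = fact n * (\<Prod>i = 0..<n. b i)"
    by (simp add: card_permutations)
  finally show ?thesis .
qed

definition lower_bidiagonal_mat :: "'a::comm_ring_1 \<Rightarrow> 'a \<Rightarrow> nat \<Rightarrow> 'a mat" where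
  "lower_bidiagonal_mat a b n = mat n n (\<lambda>(i, j).
     if j = i then (if i = 0 then 1 else a) else if j + 1 = i then - b else 0)"

lemma lower_bidiagonal_mat_carrier: "lower_bidiagonal_mat a b n \<in> carrier_mat n n"
  by (simp add: lower_bidiagonal_mat_def)

lemma det_lower_bidiagonal_mat: "det (lower_bidiagonal_mat a b n) = a ^ (n - 1)"
proof -
  have "det (lower_bidiagonal_mat a b n) = (\<Prod>i = 0..<n. if i = 0 then 1 else a)"
    by (subst det_lower_triangular[of n])
       (auto simp: lower_bidiagonal_mat_def prod_list_diag_prod intro: prod.cong)
  also have "\<dots> = a ^ (n - 1)"
    by (cases n) (simp_all only: prod.atLeast0_lessThan_Suc_shift, simp_all add: o_def)
  finally show ?thesis .
qed

lemma lower_bidiagonal_mat_mult_index: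
  assumes "A \<in> carrier_mat n m" "i < n" "j < m"
  shows "(lower_bidiagonal_mat a b n * A) $$ (i, j) =
    (if i = 0 then A $$ (0, j) else a * A $$ (i, j) - b * A $$ (i - 1, j))"
proof -
  have "(lower_bidiagonal_mat a b n * A) $$ (i, j) =
      (\<Sum>l<n. (if l = i then (if i = 0 then 1 else a) else if l + 1 = i then - b else 0) * A $$ (l, j))"
    using assms by (simp add: lower_bidiagonal_mat_def scalar_prod_def atLeast0LessThan)
  also have "\<dots> = (\<Sum>l<n. (if l = i then (if i = 0 then 1 else a) * A $$ (l, j) else 0)
      + (if l + 1 = i then - b * A $$ (l, j) else 0))"
    by (rule sum.cong) auto
  also have "\<dots> = (if i = 0 then A $$ (0, j) else a * A $$ (i, j) - b * A $$ (i - 1, j))"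
    using assms by (cases i) (auto simp: sum.distrib)
  finally show ?thesis .
qed

lemma cross_difference_telescope:
  fixes x :: "nat \<Rightarrow> 'a::field"
  assumes nonzero: "\<And>i. i \<le> j \<Longrightarrow> x i \<noteq> 0"
  shows "x 0 * x (j + 1) - x 1 * x j =
    x 0 * x j * (\<Sum>i<j. (x i * x (i + 2) - x (i + 1) ^ 2) / (x i * x (i + 1)))"
proof -
  define r where "r i = x (i + 1) / x i" for i
  have "(x i * x (i + 2) - x (i + 1) ^ 2) / (x i * x (i + 1)) = r (Suc i) - r i" if "i < j" for i
    using that nonzero[of i] nonzero[of "i + 1"]
    by (simp add: r_def field_simps power2_eq_square)
  then have "(\<Sum>i<j. (x i * x (i + 2) - x (i + 1) ^ 2) / (x i * x (i + 1))) = r j - r 0"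
    by (simp add: sum_lessThan_telescope)
  then show ?thesis
    using nonzero[of 0] nonzero[of j] by (simp add: r_def field_simps)
qed

lemma abs_cross_difference_le:
  fixes x :: "nat \<Rightarrow> 'a::linordered_field"
  assumes "c > 0" and lower: "\<And>i. i \<le> j \<Longrightarrow> c \<le> \<bar>x i\<bar>" and upper: "\<bar>x j\<bar> \<le> U"
    and gap: "\<And>i. i < j \<Longrightarrow> \<bar>x i * x (i + 2) - x (i + 1) ^ 2\<bar> \<le> E"
  shows "\<bar>x 0 * x (j + 1) - x 1 * x j\<bar> \<le> of_nat j * \<bar>x 0\<bar> * U * E / c ^ 2"
proof -
  have term_le: "\<bar>(x i * x (i + 2) - x (i + 1) ^ 2) / (x i * x (i + 1))\<bar> \<le> E / c ^ 2"
    if "i < j" for i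
  proof -
    have "c ^ 2 \<le> \<bar>x i * x (i + 1)\<bar>"
      unfolding power2_eq_square abs_mult
      using lower[of i] lower[of "i + 1"] that \<open>c > 0\<close> by (intro mult_mono) auto
    then show ?thesis
      unfolding abs_divide using gap[OF that] \<open>c > 0\<close>
      by (intro frac_le) auto
  qed
  have "\<bar>x 0 * x (j + 1) - x 1 * x j\<bar>
      = \<bar>x 0\<bar> * \<bar>x j\<bar> * \<bar>\<Sum>i<j. (x i * x (i + 2) - x (i + 1) ^ 2) / (x i * x (i + 1))\<bar>"
    using lower \<open>c > 0\<close> by (subst cross_difference_telescope) (force simp: abs_mult)+
  also have "\<dots> \<le> \<bar>x 0\<bar> * U * (of_nat j * (E / c ^ 2))"
    using upper term_le
    by (intro mult_mono order_trans[OF sum_abs] sum_bounded_above[where A = "{..<j}", simplified]) auto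
  finally show ?thesis
    by (simp add: algebra_simps)
qed

lemma hankel_index [simp]: "r < m \<Longrightarrow> s < m \<Longrightarrow> hankel p m k $$ (r, s) = p (k + 1 - m + r + s)"
  by (simp add: hankel_def)

lemma hankel_carrier: "hankel p m k \<in> carrier_mat m m"
  by (simp add: hankel_def)

lemma power_mult_abs_det_hankel_le:
  fixes p :: "nat \<Rightarrow> int" and C E :: real
  assumes p0: "p 0 > 0" and C: "C > 0" and E: "E \<ge> 0"
    and lower: "\<And>i. i \<le> n \<Longrightarrow> real_of_int (p 0) / C \<le> \<bar>real_of_int (p i)\<bar>"
    and upper: "\<And>i. i \<le> n \<Longrightarrow> \<bar>real_of_int (p i)\<bar> \<le> C * real_of_int (p 0)"
    and gap: "\<And>i. i + 2 \<le> n \<Longrightarrow> \<bar>real_of_int (p i * p (i + 2) - p (i + 1) ^ 2)\<bar> \<le> E"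
    and m: "0 < m" "m \<le> k + 1" "k + m \<le> n + 1"
  shows "real_of_int (p 0) ^ (m - 1) * \<bar>real_of_int (det (hankel p m k))\<bar>
    \<le> fact m * (C * real_of_int (p 0)) * (real n * C ^ 3 * E) ^ (m - 1)"
proof -
  define q where "q = real_of_int (p 0)"
  define L where "L = lower_bidiagonal_mat (p 0) (p 1) m"
  define b where "b i = (if i = 0 then C * q else real n * C ^ 3 * E)" for i :: nat
  have LH: "L * hankel p m k \<in> carrier_mat m m"
    unfolding L_def using lower_bidiagonal_mat_carrier hankel_carrier by (rule mult_carrier_mat)
  have q: "q > 0"
    using p0 by (simp add: q_def)
  have entry: "\<bar>real_of_int ((L * hankel p m k) $$ (i, s))\<bar> \<le> b i" if "i < m" "s < m" for i s
  proof -
    have LH_index: "(L * hankel p m k) $$ (i, s) = (if i = 0 then p (k + 1 - m + s)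
        else p 0 * p (k + 1 - m + i + s) - p 1 * p (k + 1 - m + (i - 1) + s))"
      using that by (simp add: L_def lower_bidiagonal_mat_mult_index[OF hankel_carrier that])
    show ?thesis
    proof (cases "i = 0")
      case True
      then show ?thesis
        unfolding LH_index using that m upper[of "k + 1 - m + s"] by (simp add: b_def q_def)
    next
      case False
      define j where "j = k + 1 - m + (i - 1) + s"
      have j: "j + 1 \<le> n" and "k + 1 - m + i + s = j + 1"
        using that m False by (simp_all add: j_def)
      then have "\<bar>real_of_int ((L * hankel p m k) $$ (i, s))\<bar>
          \<le> real j * q * (C * q) * E / (q / C) ^ 2"
        using abs_cross_difference_le[of "q / C" j "\<lambda>i. real_of_int (p i)" "C * q" E]
          False q C lower upper gap unfolding LH_index by (simp add: q_def j_def)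
      also have "\<dots> = real j * C ^ 3 * E"
        using q C by (simp add: field_simps power2_eq_square power3_eq_cube)
      also have "\<dots> \<le> real n * C ^ 3 * E"
        using j C E by (intro mult_right_mono) auto
      finally show ?thesis
        using False by (simp add: b_def)
    qed
  qed
  have "\<bar>det (of_int_hom.mat_hom (L * hankel p m k))\<bar> \<le> fact m * (\<Prod>i = 0..<m. b i)"
    by (rule abs_det_le_fact_mult_prod) (use LH entry carrier_matD[OF LH] in auto)
  then have "\<bar>real_of_int (det (L * hankel p m k))\<bar> \<le> fact m * (\<Prod>i = 0..<m. b i)"
    by simp
  also have "(\<Prod>i = 0..<m. b i) = C * q * (real n * C ^ 3 * E) ^ (m - 1)"
    using m by (simp add: b_def prod.atLeast_Suc_lessThan)
  also have "det (L * hankel p m k) = p 0 ^ (m - 1) * det (hankel p m k)"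
    by (simp add: L_def det_mult[OF lower_bidiagonal_mat_carrier hankel_carrier] det_lower_bidiagonal_mat)
  finally show ?thesis
    using q by (simp add: q_def abs_mult mult.assoc)
qed

lemma abs_det_hankel_le:
  fixes p :: "nat \<Rightarrow> int" and C lam :: real
  assumes p0: "p 0 > 0" and "C > 0"
    and "\<And>i. i \<le> n \<Longrightarrow> real_of_int (p 0) / C \<le> \<bar>real_of_int (p i)\<bar>"
    and "\<And>i. i \<le> n \<Longrightarrow> \<bar>real_of_int (p i)\<bar> \<le> C * real_of_int (p 0)"
    and "\<And>i. i + 2 \<le> n \<Longrightarrow>
      \<bar>real_of_int (p i * p (i + 2) - p (i + 1) ^ 2)\<bar> \<le> C * real_of_int (p 0) powr (1 - lam)"
    and "0 < m" "m \<le> k + 1" "k + m \<le> n + 1"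
  shows "\<bar>real_of_int (det (hankel p m k))\<bar>
    \<le> fact m * C * (real n * C ^ 4) ^ (m - 1) * real_of_int (p 0) powr (1 - real (m - 1) * lam)"
proof -
  define q where "q = real_of_int (p 0)"
  have q: "q > 0"
    using p0 by (simp add: q_def)
  have "q ^ (m - 1) * \<bar>real_of_int (det (hankel p m k))\<bar>
      \<le> fact m * (C * q) * (real n * C ^ 3 * (C * q powr (1 - lam))) ^ (m - 1)"
    unfolding q_def using assms by (intro power_mult_abs_det_hankel_le) auto
  also have "\<dots> = fact m * C * (real n * C ^ 4) ^ (m - 1) * (q * (q powr (1 - lam)) ^ (m - 1))"
    by (simp add: eval_nat_numeral power_mult_distrib mult_ac)
  also have "q * (q powr (1 - lam)) ^ (m - 1) = q powr (1 + (1 - lam) * real (m - 1))"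
    using q by (simp add: powr_add powr_powr powr_realpow[symmetric])
  also have "\<dots> = q ^ (m - 1) * q powr (1 - real (m - 1) * lam)"
    using q by (simp add: powr_add[symmetric] powr_realpow[symmetric] algebra_simps)
  finally show ?thesis
    using q by (simp add: q_def)
qed

theorem proposition4p2:
  fixes n :: nat and C :: real
  assumes "n \<ge> 2" and "C \<ge> 1"
  shows "\<exists>C' > 0. \<forall>(lam::real) (p :: nat \<Rightarrow> int).
    lam > 0 \<longrightarrow> p 0 \<ge> 1 \<longrightarrow>
    (\<forall>i \<le> n. real_of_int (p 0) / C \<le> \<bar>real_of_int (p i)\<bar> \<and>
               \<bar>real_of_int (p i)\<bar> \<le> C * real_of_int (p 0)) \<longrightarrow>
    (\<forall>i. 1 \<le> i \<and> i \<le> n - 1 \<longrightarrow>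
       \<bar>real_of_int (p (i - 1) * p (i + 1) - p i ^ 2)\<bar> \<le> C * real_of_int (p 0) powr (1 - lam)) \<longrightarrow>
    (\<forall>m k. 0 < m \<and> 0 < k \<and> m \<le> k + 1 \<and> k + m - 1 \<le> n \<longrightarrow>
       \<bar>real_of_int (det (hankel p m k))\<bar> \<le> C' * real_of_int (p 0) powr (1 - real (m - 1) * lam))"
proof -
  define A where "A = real n * C ^ 4"
  have A: "A \<ge> 1"
    using assms mult_mono[of 1 "real n" 1 "C ^ 4"] one_le_power[of C 4] by (simp add: A_def)
  show ?thesis
  proof (intro exI[of _ "fact n * C * A ^ n"] conjI allI impI)
    show "fact n * C * A ^ n > 0"
      using assms A by simp
    fix lam :: real and p :: "nat \<Rightarrow> int" and m k :: nat
    assume "lam > 0" and "p 0 \<ge> 1"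
      and "\<forall>i \<le> n. real_of_int (p 0) / C \<le> \<bar>real_of_int (p i)\<bar> \<and>
               \<bar>real_of_int (p i)\<bar> \<le> C * real_of_int (p 0)"
      and gaps: "\<forall>i. 1 \<le> i \<and> i \<le> n - 1 \<longrightarrow>
       \<bar>real_of_int (p (i - 1) * p (i + 1) - p i ^ 2)\<bar> \<le> C * real_of_int (p 0) powr (1 - lam)"
      and mk: "0 < m \<and> 0 < k \<and> m \<le> k + 1 \<and> k + m - 1 \<le> n"
    moreover have "\<bar>real_of_int (p i * p (i + 2) - p (i + 1) ^ 2)\<bar>
        \<le> C * real_of_int (p 0) powr (1 - lam)" if "i + 2 \<le> n" for i
      using gaps[rule_format, of "i + 1"] that by (simp add: numeral_2_eq_2)
    ultimately have "\<bar>real_of_int (det (hankel p m k))\<bar>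
        \<le> fact m * C * A ^ (m - 1) * real_of_int (p 0) powr (1 - real (m - 1) * lam)"
      unfolding A_def using assms by (intro abs_det_hankel_le) auto
    also have "\<dots> \<le> fact n * C * A ^ n * real_of_int (p 0) powr (1 - real (m - 1) * lam)"
      using assms A mk
      by (intro mult_right_mono mult_mono fact_mono power_increasing) auto
    finally show "\<bar>real_of_int (det (hankel p m k))\<bar>
        \<le> fact n * C * A ^ n * real_of_int (p 0) powr (1 - real (m - 1) * lam)" .
  qed
qed

end
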